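(* Let $(X_{i,j})_{1\le i\le g,\,1\le j\le n_i}$ be $\{0,1\}$-valued and suppose there is a probability measure $\nu$ on $[0,1]^g$ such that for all $0\le k_i\le n_i$, \[ P(S_1=k_1,\dots,S_g=k_g)=\binom{n_1}{k_1}\cdots\binom{n_g}{k_g}\int_{[0,1]^g}\prod_{i=1}^g\theta_i^{k_i}(1-\theta_i)^{n_i-k_i}\,d\nu(\theta_1,\dots,\theta_g), \] and every sequence with the same values of $(S_1,\dots,S_g)$ has the same probability. Then $\mathrm{Cov}_{k_1,\dots,k_g}=E_\nu\big[\prod_i(\theta_i-E_\nu\theta_i)^{k_i}\big]$ for all $0\le k_i\le n_i$; consequently $\mathrm{Cov}_{2k_1,\dots,2k_g}\ge0$ for all integers $0\le k_i\le\lfloor n_i/2\rfloor$; and, if $n_i\ge2$ for all $i$, the $g\times g$ matrix $C$ with $C_{ii}=\mathrm{Cov}$ with index $2$ in position $i$ and $0$ elsewhere, and $C_{ij}$ ($i\ne j$) $=\mathrm{Cov}$ with index $1$ in positions $i$ and $j$ and $0$ elsewhere, is positive semidefinite.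
   Context: $S_i=\sum_{j=1}^{n_i}X_{i,j}$. $w(i)=E[X_{i,1}]$ and $\mathrm{Cov}_{k_1,\dots,k_g}=E\Big[\prod_{i=1}^g\prod_{j=1}^{k_i}\big(X_{i,j}-w(i)\big)\Big]$. *)

theory Defs
  imports "HOL-Probability.Probability"
begin

text \<open>Indices are 0-based: group i ranges over i < g, position j over j < n i.
  The paper's X_{i,1} is X i 0 here.\<close>

definition wmean :: "'a measure \<Rightarrow> (nat \<Rightarrow> nat \<Rightarrow> 'a \<Rightarrow> real) \<Rightarrow> nat \<Rightarrow> real" where
  "wmean M X i = (\<integral>\<omega>. X i 0 \<omega> \<partial>M)"

definition cov :: "'a measure \<Rightarrow> (nat \<Rightarrow> nat \<Rightarrow> 'a \<Rightarrow> real) \<Rightarrow> nat \<Rightarrow> (nat \<Rightarrow> nat) \<Rightarrow> real" where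
  "cov M X g k = (\<integral>\<omega>. (\<Prod>i<g. \<Prod>j<k i. (X i j \<omega> - wmean M X i)) \<partial>M)"

definition covmat :: "'a measure \<Rightarrow> (nat \<Rightarrow> nat \<Rightarrow> 'a \<Rightarrow> real) \<Rightarrow> nat \<Rightarrow> nat \<Rightarrow> nat \<Rightarrow> real" where
  "covmat M X g i j =
     (if i = j then cov M X g (\<lambda>l. if l = i then 2 else 0)
      else cov M X g (\<lambda>l. if l = i \<or> l = j then 1 else 0))"

end

theory Submission
  imports Defs
begin

(* Call a 0-1 array y = (y i j), i < g, j < n i, a realisation of X.  All
   realisations with the same row sums k are equally likely (exchangeability) and there are
   \<Prod>i. (n i choose k i) of them, so the mixture formula for the row sums gives, for every
   single realisation, the de Finetti representation
       P(X = y) = \<integral> \<Prod>i j. \<theta>_i^{y_ij} (1 - \<theta>_i)^{1 - y_ij} d\<nu>(\<theta>).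
   Expanding an expectation over the finitely many realisations and refactorising the sum
   shows that E[\<Prod>i j. h_ij(X_ij)] = \<integral> \<Prod>i j. (h_ij(0)(1 - \<theta>_i) + h_ij(1)\<theta>_i) d\<nu>, i.e.
   conditionally on \<theta> the entries are independent Bernoulli(\<theta>_i).  Choosing h_ij(t) = t - c_i
   on the first k_i entries of row i gives all mixed central moments; c = 0 identifies
   w(i) = E_\<nu> \<theta>_i.  The three claims follow: Cov_k is the k-th central moment of \<nu>, even
   moments have nonnegative integrand, and C is the Gram matrix of \<theta>_i - E_\<nu> \<theta>_i in L^2(\<nu>). *)

definition binary_arrays :: "nat \<Rightarrow> (nat \<Rightarrow> nat) \<Rightarrow> (nat \<Rightarrow> nat \<Rightarrow> real) set" where
  "binary_arrays g n = (\<Pi>\<^sub>E i\<in>{..<g}. \<Pi>\<^sub>E j\<in>{..<n i}. {0, 1})"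

definition row_class :: "nat \<Rightarrow> (nat \<Rightarrow> nat) \<Rightarrow> (nat \<Rightarrow> nat) \<Rightarrow> (nat \<Rightarrow> nat \<Rightarrow> real) set" where
  "row_class g n k = {y \<in> binary_arrays g n. \<forall>i<g. (\<Sum>j<n i. y i j) = real (k i)}"

definition ones :: "nat \<Rightarrow> (nat \<Rightarrow> real) \<Rightarrow> nat" where
  "ones m z = card {j\<in>{..<m}. z j = 1}"

definition bernoulli_weight :: "real \<Rightarrow> real \<Rightarrow> real" where
  "bernoulli_weight t x = (if x = 1 then t else 1 - t)"

lemma finite_binary_arrays: "finite (binary_arrays g n)"
  unfolding binary_arrays_def by (intro finite_PiE) auto

lemma binary_arrays_eqI:
  assumes "x \<in> binary_arrays g n" "y \<in> binary_arrays g n"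
    and "\<And>i j. i < g \<Longrightarrow> j < n i \<Longrightarrow> x i j = y i j"
  shows "x = y"
  using assms(1,2) unfolding binary_arrays_def
proof (rule PiE_ext)
  fix i assume i: "i \<in> {..<g}"
  show "x i = y i"
    using PiE_mem[OF assms(1)[unfolded binary_arrays_def] i]
      PiE_mem[OF assms(2)[unfolded binary_arrays_def] i]
    by (rule PiE_ext) (use assms(3) i in auto)
qed

lemma sum_binary_word:
  assumes "z \<in> (\<Pi>\<^sub>E j\<in>{..<m}. {0, 1::real})"
  shows "(\<Sum>j<m. z j) = real (ones m z)"
proof -
  have "(\<Sum>j<m. z j) = (\<Sum>j<m. if z j = 1 then 1 else 0)"
    using assms by (intro sum.cong) (auto simp: PiE_iff)
  then show ?thesis by (simp add: sum.If_cases ones_def Int_def)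
qed

lemma prod_bernoulli_weight:
  assumes "z \<in> (\<Pi>\<^sub>E j\<in>{..<m}. {0, 1::real})"
  shows "(\<Prod>j<m. bernoulli_weight t (z j)) = t ^ ones m z * (1 - t) ^ (m - ones m z)"
proof -
  have "{..<m} \<inter> - {j. z j = 1} = {..<m} - {j\<in>{..<m}. z j = 1}" by auto
  moreover have "card ({..<m} - {j\<in>{..<m}. z j = 1}) = m - ones m z"
    unfolding ones_def by (subst card_Diff_subset) auto
  ultimately have "card ({..<m} \<inter> - {j. z j = 1}) = m - ones m z" by simp
  then show ?thesis
    by (simp add: bernoulli_weight_def prod.If_cases ones_def Int_def)
qed

lemma card_binary_words:
  "card {z \<in> (\<Pi>\<^sub>E j\<in>{..<m}. {0, 1::real}). (\<Sum>j<m. z j) = real k} = m choose k"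
proof -
  let ?A = "{z \<in> (\<Pi>\<^sub>E j\<in>{..<m}. {0, 1::real}). (\<Sum>j<m. z j) = real k}"
  let ?B = "{B. B \<subseteq> {..<m} \<and> card B = k}"
  have "bij_betw (\<lambda>z. {j\<in>{..<m}. z j = 1}) ?A ?B"
  proof (rule bij_betw_byWitness[where f'="\<lambda>B. \<lambda>j\<in>{..<m}. if j \<in> B then 1 else 0"])
    show "\<forall>z\<in>?A. (\<lambda>j\<in>{..<m}. if j \<in> {j\<in>{..<m}. z j = 1} then 1 else 0) = z"
      by (auto simp: PiE_iff extensional_def fun_eq_iff)
    show "(\<lambda>z. {j\<in>{..<m}. z j = 1}) ` ?A \<subseteq> ?B"
      using sum_binary_word by (fastforce simp: ones_def)
    show "(\<lambda>B. \<lambda>j\<in>{..<m}. if j \<in> B then 1 else (0::real)) ` ?B \<subseteq> ?A"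
    proof (rule image_subsetI)
      fix B assume "B \<in> ?B"
      then have B: "B \<subseteq> {..<m}" "k = card B" by auto
      let ?z = "\<lambda>j\<in>{..<m}. if j \<in> B then 1 else (0::real)"
      have z: "?z \<in> (\<Pi>\<^sub>E j\<in>{..<m}. {0, 1})" by auto
      have "{j\<in>{..<m}. ?z j = 1} = B" using B by auto
      then have "(\<Sum>j<m. ?z j) = real k"
        using sum_binary_word[OF z] B by (simp add: ones_def)
      with z show "?z \<in> ?A" by blast
    qed
  qed auto
  then show ?thesis by (simp add: bij_betw_same_card n_subsets)
qed

lemma card_row_class:
  "card (row_class g n k) = (\<Prod>i<g. n i choose k i)"
proof -
  have "row_class g n k = (\<Pi>\<^sub>E i\<in>{..<g}. {z \<in> (\<Pi>\<^sub>E j\<in>{..<n i}. {0, 1}). (\<Sum>j<n i. z j) = real (k i)})"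
    by (auto simp: row_class_def binary_arrays_def PiE_iff extensional_def)
  then show ?thesis by (simp add: card_PiE card_binary_words)
qed

text \<open>A sum over all 0-1 arrays of a product of entrywise factors factorises
  (distributivity); this is what makes the mixture behave like independent coin flips.\<close>
lemma sum_binary_arrays_factor:
  fixes F :: "nat \<Rightarrow> nat \<Rightarrow> real \<Rightarrow> 'b::comm_semiring_1"
  shows "(\<Sum>y\<in>binary_arrays g n. \<Prod>i<g. \<Prod>j<n i. F i j (y i j))
       = (\<Prod>i<g. \<Prod>j<n i. F i j 0 + F i j 1)"
proof -
  have "(\<Prod>i<g. \<Prod>j<n i. F i j 0 + F i j 1)
      = (\<Prod>i<g. \<Sum>z\<in>(\<Pi>\<^sub>E j\<in>{..<n i}. {0, 1}). \<Prod>j<n i. F i j (z j))"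
    by (intro prod.cong refl) (simp add: prod_sum_PiE[symmetric])
  also have "\<dots> = (\<Sum>y\<in>binary_arrays g n. \<Prod>i<g. \<Prod>j<n i. F i j (y i j))"
    unfolding binary_arrays_def by (subst prod_sum_PiE) (auto intro: finite_PiE)
  finally show ?thesis ..
qed

lemma prod_lessThan_truncate:
  fixes k m :: nat
  assumes "k \<le> m"
  shows "(\<Prod>j<m. if j < k then f j else 1) = (\<Prod>j<k. f j)"
proof -
  have "{..<m} \<inter> {j. j < k} = {..<k}" using assms by auto
  then show ?thesis by (simp add: prod.If_cases)
qed

definition pair_exponent :: "nat \<Rightarrow> nat \<Rightarrow> nat \<Rightarrow> nat" where
  "pair_exponent i j l =
     (if i = j then (if l = i then 2 else 0) else (if l = i \<or> l = j then 1 else 0))"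

lemma covmat_eq_cov: "covmat M X g i j = cov M X g (pair_exponent i j)"
  unfolding covmat_def pair_exponent_def by (simp add: if_distrib[of "cov M X g"] cong: if_cong)

lemma prod_pair_exponent:
  fixes a :: "nat \<Rightarrow> 'b::comm_monoid_mult"
  assumes "i < g" "j < g"
  shows "(\<Prod>l<g. a l ^ pair_exponent i j l) = a i * a j"
proof (cases "i = j")
  case True
  then have "(\<Prod>l<g. a l ^ pair_exponent i j l) = (\<Prod>l<g. if l = i then a l ^ 2 else 1)"
    by (intro prod.cong) (auto simp: pair_exponent_def)
  then show ?thesis using True assms by (simp add: power2_eq_square)
next
  case False
  then have "(\<Prod>l<g. a l ^ pair_exponent i j l) = (\<Prod>l<g. if l \<in> {i, j} then a l else 1)"
    by (intro prod.cong) (auto simp: pair_exponent_def)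
  also have "\<dots> = (\<Prod>l\<in>{i, j}. a l)"
    using assms by (subst prod.If_cases) (auto intro!: arg_cong[where f="prod a"])
  finally show ?thesis using False by simp
qed

text \<open>A Gram matrix of square-integrable functions is positive semidefinite:
  its quadratic form is the integral of a square.\<close>
lemma integral_gram_nonneg:
  fixes f :: "'i \<Rightarrow> 'b \<Rightarrow> real"
  assumes "finite I" and int: "\<And>i j. i \<in> I \<Longrightarrow> j \<in> I \<Longrightarrow> integrable N (\<lambda>x. f i x * f j x)"
  shows "0 \<le> (\<Sum>i\<in>I. \<Sum>j\<in>I. v i * (\<integral>x. f i x * f j x \<partial>N) * v j)"
proof -
  have "(\<Sum>i\<in>I. \<Sum>j\<in>I. v i * (\<integral>x. f i x * f j x \<partial>N) * v j)
      = (\<Sum>i\<in>I. \<Sum>j\<in>I. \<integral>x. v i * v j * (f i x * f j x) \<partial>N)"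
    by (simp add: mult_ac)
  also have "\<dots> = (\<integral>x. (\<Sum>i\<in>I. \<Sum>j\<in>I. v i * v j * (f i x * f j x)) \<partial>N)"
    using int by (simp add: Bochner_Integration.integral_sum)
  also have "\<dots> = (\<integral>x. (\<Sum>i\<in>I. v i * f i x)\<^sup>2 \<partial>N)"
    by (simp add: power2_eq_square sum_product mult_ac)
  also have "\<dots> \<ge> 0" by simp
  finally show ?thesis .
qed

locale exchangeable_mixture =
  M: prob_space M + mix: prob_space \<nu>
  for M :: "'a measure" and \<nu> :: "(nat \<Rightarrow> real) measure" +
  fixes X :: "nat \<Rightarrow> nat \<Rightarrow> 'a \<Rightarrow> real" and g :: nat and n :: "nat \<Rightarrow> nat"
  assumes meas: "\<And>i j. i < g \<Longrightarrow> j < n i \<Longrightarrow> X i j \<in> borel_measurable M"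
    and binary: "\<And>i j \<omega>. i < g \<Longrightarrow> j < n i \<Longrightarrow> \<omega> \<in> space M \<Longrightarrow> X i j \<omega> \<in> {0, 1}"
    and nu_sets: "sets \<nu> = sets (PiM {..<g} (\<lambda>_. restrict_space borel {0..1::real}))"
    and mixture: "\<And>k. (\<forall>i<g. k i \<le> n i) \<Longrightarrow>
        measure M {\<omega> \<in> space M. \<forall>i<g. (\<Sum>j<n i. X i j \<omega>) = real (k i)}
        = (\<Prod>i<g. real (n i choose k i)) *
          (\<integral>\<theta>. (\<Prod>i<g. \<theta> i ^ k i * (1 - \<theta> i) ^ (n i - k i)) \<partial>\<nu>)"
    and exch: "\<And>x y :: nat \<Rightarrow> nat \<Rightarrow> real.
        (\<forall>i<g. \<forall>j<n i. x i j \<in> {0, 1} \<and> y i j \<in> {0, 1}) \<Longrightarrow>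
        (\<forall>i<g. (\<Sum>j<n i. x i j) = (\<Sum>j<n i. y i j)) \<Longrightarrow>
        measure M {\<omega> \<in> space M. \<forall>i<g. \<forall>j<n i. X i j \<omega> = x i j}
        = measure M {\<omega> \<in> space M. \<forall>i<g. \<forall>j<n i. X i j \<omega> = y i j}"
begin

definition cylinder :: "(nat \<Rightarrow> nat \<Rightarrow> real) \<Rightarrow> 'a set" where
  "cylinder y = {\<omega> \<in> space M. \<forall>i<g. \<forall>j<n i. X i j \<omega> = y i j}"

definition pattern :: "'a \<Rightarrow> nat \<Rightarrow> nat \<Rightarrow> real" where
  "pattern \<omega> = (\<lambda>i\<in>{..<g}. \<lambda>j\<in>{..<n i}. X i j \<omega>)"

lemma pattern_in_binary_arrays: "\<omega> \<in> space M \<Longrightarrow> pattern \<omega> \<in> binary_arrays g n"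
  using binary by (auto simp: pattern_def binary_arrays_def)

lemma mem_cylinder_iff:
  assumes "y \<in> binary_arrays g n" and "\<omega> \<in> space M"
  shows "\<omega> \<in> cylinder y \<longleftrightarrow> y = pattern \<omega>"
proof
  assume "\<omega> \<in> cylinder y"
  then show "y = pattern \<omega>"
    using assms pattern_in_binary_arrays[OF assms(2)]
    by (intro binary_arrays_eqI) (auto simp: cylinder_def pattern_def)
qed (use assms(2) in \<open>simp add: cylinder_def pattern_def\<close>)

lemma sets_cylinder: "cylinder y \<in> sets M"
proof -
  have "Measurable.pred M (\<lambda>\<omega>. X i j \<omega> = y i j)" if "i < g" "j < n i" for i j
    using meas[OF that] by (rule pred_eq_const1) simp
  then have "Measurable.pred M (\<lambda>\<omega>. \<forall>i\<in>{..<g}. \<forall>j\<in>{..<n i}. X i j \<omega> = y i j)"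
    by (intro pred_intros_finite(3) finite_lessThan) simp
  then have "{\<omega> \<in> space M. \<forall>i\<in>{..<g}. \<forall>j\<in>{..<n i}. X i j \<omega> = y i j} \<in> sets M"
    unfolding pred_def .
  moreover have "cylinder y = {\<omega> \<in> space M. \<forall>i\<in>{..<g}. \<forall>j\<in>{..<n i}. X i j \<omega> = y i j}"
    by (auto simp: cylinder_def)
  ultimately show ?thesis by (simp only:)
qed

text \<open>The event of prescribed row sums is the disjoint union of the cylinders in the row class.\<close>
lemma measure_row_event:
  "measure M {\<omega> \<in> space M. \<forall>i<g. (\<Sum>j<n i. X i j \<omega>) = real (k i)}
   = (\<Sum>y\<in>row_class g n k. measure M (cylinder y))"
proof -
  have sum_pattern: "(\<Sum>j<n i. pattern \<omega> i j) = (\<Sum>j<n i. X i j \<omega>)" if "i < g" for i \<omega>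
    using that by (simp add: pattern_def)
  have event_eq: "{\<omega> \<in> space M. \<forall>i<g. (\<Sum>j<n i. X i j \<omega>) = real (k i)}
      = (\<Union>y\<in>row_class g n k. cylinder y)"
  proof (intro equalityI subsetI)
    fix \<omega> assume \<omega>: "\<omega> \<in> {\<omega> \<in> space M. \<forall>i<g. (\<Sum>j<n i. X i j \<omega>) = real (k i)}"
    then have "pattern \<omega> \<in> row_class g n k"
      by (auto simp: row_class_def sum_pattern pattern_in_binary_arrays)
    moreover have "\<omega> \<in> cylinder (pattern \<omega>)"
      using \<omega> mem_cylinder_iff pattern_in_binary_arrays by blast
    ultimately show "\<omega> \<in> (\<Union>y\<in>row_class g n k. cylinder y)" by blast
  qed (auto simp: cylinder_def row_class_def)
  have "disjoint_family_on cylinder (row_class g n k)"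
    unfolding disjoint_family_on_def
  proof (intro ballI impI)
    fix a b assume ab: "a \<in> row_class g n k" "b \<in> row_class g n k" "a \<noteq> b"
    show "cylinder a \<inter> cylinder b = {}"
    proof (rule equals0I)
      fix \<omega> assume \<omega>: "\<omega> \<in> cylinder a \<inter> cylinder b"
      then have "\<omega> \<in> space M" by (simp add: cylinder_def)
      with \<omega> ab have "a = pattern \<omega>" "b = pattern \<omega>"
        using mem_cylinder_iff by (auto simp: row_class_def)
      with ab(3) show False by simp
    qed
  qed
  moreover have "finite (row_class g n k)"
    using finite_binary_arrays by (simp add: row_class_def)
  ultimately show ?thesis
    unfolding event_eq using sets_cylinder by (intro M.finite_measure_finite_Union) auto
qed

lemma row_of_binary_array:
  "y \<in> binary_arrays g n \<Longrightarrow> i < g \<Longrightarrow> y i \<in> (\<Pi>\<^sub>E j\<in>{..<n i}. {0, 1})"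
  by (auto simp: binary_arrays_def)

text \<open>De Finetti form on cylinders: all arrays in a row class are equally likely
  (exchangeability), and there are \<Prod>i. n i choose k i of them, so the mixture formula for
  the row sums divides down to a single array.\<close>
lemma measure_cylinder:
  assumes y: "y \<in> binary_arrays g n"
  shows "measure M (cylinder y) = (\<integral>\<theta>. (\<Prod>i<g. \<Prod>j<n i. bernoulli_weight (\<theta> i) (y i j)) \<partial>\<nu>)"
proof -
  define k where "k i = ones (n i) (y i)" for i
  have "k i \<le> n i" for i
    unfolding k_def ones_def by (rule order_trans[OF card_mono[of "{..<n i}"]]) auto
  then have k_le: "\<forall>i<g. k i \<le> n i" by blast
  have y_class: "y \<in> row_class g n k"
    using y sum_binary_word[OF row_of_binary_array[OF y]] by (simp add: row_class_def k_def)
  have same_prob: "measure M (cylinder z) = measure M (cylinder y)" if "z \<in> row_class g n k" for z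
    using that y_class unfolding cylinder_def
    by (intro exch) (auto simp: row_class_def binary_arrays_def PiE_iff)
  have "real (card (row_class g n k)) * measure M (cylinder y)
      = measure M {\<omega> \<in> space M. \<forall>i<g. (\<Sum>j<n i. X i j \<omega>) = real (k i)}"
    by (simp add: measure_row_event same_prob)
  also have "\<dots> = real (card (row_class g n k)) *
      (\<integral>\<theta>. (\<Prod>i<g. \<theta> i ^ k i * (1 - \<theta> i) ^ (n i - k i)) \<partial>\<nu>)"
    by (simp add: mixture[OF k_le] card_row_class)
  also have "(\<integral>\<theta>. (\<Prod>i<g. \<theta> i ^ k i * (1 - \<theta> i) ^ (n i - k i)) \<partial>\<nu>)
      = (\<integral>\<theta>. (\<Prod>i<g. \<Prod>j<n i. bernoulli_weight (\<theta> i) (y i j)) \<partial>\<nu>)"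
    by (simp add: prod_bernoulli_weight[OF row_of_binary_array[OF y]] k_def)
  finally show ?thesis
    using k_le by (simp add: card_row_class) (meson lessThan_iff not_le)
qed

lemma space_mixing: "space \<nu> = (\<Pi>\<^sub>E i\<in>{..<g}. {0..1::real})"
  using sets_eq_imp_space_eq[OF nu_sets] by (simp add: space_PiM)

lemma coordinate_range: "\<theta> \<in> space \<nu> \<Longrightarrow> i < g \<Longrightarrow> \<theta> i \<in> {0..1}"
  using space_mixing by auto

lemma coordinate_measurable: "i < g \<Longrightarrow> (\<lambda>\<theta>. \<theta> i) \<in> borel_measurable \<nu>"
  using measurable_component_singleton[of i "{..<g}" "\<lambda>_. restrict_space borel {0..1::real}"]
  by (simp add: measurable_cong_sets[OF nu_sets refl] measurable_restrict_space2_iff)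

lemma integrable_mixing_bounded:
  fixes B :: real
  assumes "f \<in> borel_measurable \<nu>" and "\<And>\<theta>. \<theta> \<in> space \<nu> \<Longrightarrow> \<bar>f \<theta>\<bar> \<le> B"
  shows "integrable \<nu> f"
  using assms by (intro mix.integrable_const_bound[where B=B] AE_I2) auto

lemma integrable_bernoulli_product:
  "integrable \<nu> (\<lambda>\<theta>. \<Prod>i<g. \<Prod>j<n i. bernoulli_weight (\<theta> i) (y i j))"
proof (rule integrable_mixing_bounded[where B=1])
  have "(\<lambda>\<theta>. bernoulli_weight (\<theta> i) x) \<in> borel_measurable \<nu>" if "i < g" for i x
    using coordinate_measurable[OF that] by (simp add: bernoulli_weight_def)
  then show "(\<lambda>\<theta>. \<Prod>i<g. \<Prod>j<n i. bernoulli_weight (\<theta> i) (y i j)) \<in> borel_measurable \<nu>"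
    by (intro borel_measurable_prod) auto
  fix \<theta> assume "\<theta> \<in> space \<nu>"
  then have unit: "0 \<le> bernoulli_weight (\<theta> i) x \<and> bernoulli_weight (\<theta> i) x \<le> 1" if "i < g" for i x
    using coordinate_range[OF _ that] by (simp add: bernoulli_weight_def)
  have "0 \<le> (\<Prod>i<g. \<Prod>j<n i. bernoulli_weight (\<theta> i) (y i j))"
    using unit by (intro prod_nonneg) auto
  moreover have "(\<Prod>i<g. \<Prod>j<n i. bernoulli_weight (\<theta> i) (y i j)) \<le> 1"
    using unit by (intro prod_le_1 conjI prod_nonneg ballI) auto
  ultimately show "\<bar>\<Prod>i<g. \<Prod>j<n i. bernoulli_weight (\<theta> i) (y i j)\<bar> \<le> 1" by simp
qed




text \<open>Conditionally on \<theta> the entries behave like independent Bernoulli(\<theta> i) variables: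
  the expectation of any entrywise product is the \<nu>-average of the product of the
  Bernoulli expectations. Proof: expand over cylinders, apply the cylinder formula, and
  refactorise the sum over arrays.\<close>
lemma expectation_product:
  fixes h :: "nat \<Rightarrow> nat \<Rightarrow> real \<Rightarrow> real"
  shows "(\<integral>\<omega>. (\<Prod>i<g. \<Prod>j<n i. h i j (X i j \<omega>)) \<partial>M)
       = (\<integral>\<theta>. (\<Prod>i<g. \<Prod>j<n i. h i j 0 * (1 - \<theta> i) + h i j 1 * \<theta> i) \<partial>\<nu>)"
proof -
  define f where "f y = (\<Prod>i<g. \<Prod>j<n i. h i j (y i j))" for y
  define w where "w \<theta> y = (\<Prod>i<g. \<Prod>j<n i. bernoulli_weight (\<theta> i) (y i j))" for \<theta> y
  have decompose: "(\<Prod>i<g. \<Prod>j<n i. h i j (X i j \<omega>))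
      = (\<Sum>y\<in>binary_arrays g n. f y * indicator (cylinder y) \<omega>)" if "\<omega> \<in> space M" for \<omega>
  proof -
    have "(\<Sum>y\<in>binary_arrays g n. f y * indicator (cylinder y) \<omega>)
        = (\<Sum>y\<in>binary_arrays g n. if y = pattern \<omega> then f y else 0)"
      using that by (intro sum.cong) (auto simp: mem_cylinder_iff)
    also have "\<dots> = f (pattern \<omega>)"
      using that finite_binary_arrays pattern_in_binary_arrays by simp
    finally show ?thesis by (simp add: f_def pattern_def)
  qed
  have "(\<integral>\<omega>. (\<Prod>i<g. \<Prod>j<n i. h i j (X i j \<omega>)) \<partial>M)
      = (\<integral>\<omega>. (\<Sum>y\<in>binary_arrays g n. f y * indicator (cylinder y) \<omega>) \<partial>M)"
    by (intro Bochner_Integration.integral_cong) (simp_all add: decompose)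
  also have "\<dots> = (\<Sum>y\<in>binary_arrays g n. \<integral>\<omega>. f y * indicator (cylinder y) \<omega> \<partial>M)"
    by (intro Bochner_Integration.integral_sum integrable_real_mult_indicator[OF sets_cylinder]) simp
  also have "\<dots> = (\<Sum>y\<in>binary_arrays g n. f y * measure M (cylinder y))"
    using sets.sets_into_space[OF sets_cylinder] by (simp add: Int_absorb2)
  also have "\<dots> = (\<Sum>y\<in>binary_arrays g n. \<integral>\<theta>. f y * w \<theta> y \<partial>\<nu>)"
    by (simp add: measure_cylinder w_def)
  also have "\<dots> = (\<integral>\<theta>. (\<Sum>y\<in>binary_arrays g n. f y * w \<theta> y) \<partial>\<nu>)"
    using integrable_bernoulli_product by (simp add: Bochner_Integration.integral_sum w_def)
  also have "\<dots> = (\<integral>\<theta>. (\<Prod>i<g. \<Prod>j<n i. h i j 0 * (1 - \<theta> i) + h i j 1 * \<theta> i) \<partial>\<nu>)"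
    using sum_binary_arrays_factor[where F="\<lambda>i j t. h i j t * bernoulli_weight (_ i) t"]
    by (simp add: f_def w_def prod.distrib[symmetric] bernoulli_weight_def)
  finally show ?thesis .
qed

lemma mixed_central_moment:
  assumes k: "\<forall>i<g. k i \<le> n i"
  shows "(\<integral>\<omega>. (\<Prod>i<g. \<Prod>j<k i. (X i j \<omega> - c i)) \<partial>M)
       = (\<integral>\<theta>. (\<Prod>i<g. (\<theta> i - c i) ^ k i) \<partial>\<nu>)"
proof -
  define h where "h i j t = (if j < k i then t - c i else 1)" for i j and t :: real
  have "(\<Prod>j<n i. h i j (X i j \<omega>)) = (\<Prod>j<k i. X i j \<omega> - c i)" if "i < g" for i \<omega>
    using k that unfolding h_def by (simp add: prod_lessThan_truncate)
  moreover have "(\<Prod>j<n i. h i j 0 * (1 - \<theta> i) + h i j 1 * \<theta> i) = (\<theta> i - c i) ^ k i"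
    if "i < g" for i \<theta>
  proof -
    have "(\<Prod>j<n i. h i j 0 * (1 - \<theta> i) + h i j 1 * \<theta> i)
        = (\<Prod>j<n i. if j < k i then \<theta> i - c i else 1)"
      unfolding h_def by (intro prod.cong) (auto simp: algebra_simps)
    then show ?thesis using k that by (simp add: prod_lessThan_truncate)
  qed
  ultimately show ?thesis
    using expectation_product[of h] by simp
qed

lemma mean_eq_mixing_mean:
  assumes "i < g" and "0 < n i"
  shows "wmean M X i = (\<integral>\<theta>. \<theta> i \<partial>\<nu>)"
proof -
  define k where "k l = (if l = i then 1 else 0 :: nat)" for l
  have "(\<Prod>l<g. \<Prod>j<k l. (X l j \<omega> - 0)) = X i 0 \<omega>" for \<omega>
    using assms by (simp add: k_def if_distrib[of "\<lambda>m. \<Prod>j<m. _ j"] cong: if_cong)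
  moreover have "(\<Prod>l<g. (\<theta> l - 0) ^ k l) = \<theta> i" for \<theta> :: "nat \<Rightarrow> real"
    using assms by (simp add: k_def if_distrib[of "\<lambda>m. _ ^ m"] cong: if_cong)
  moreover have "\<forall>l<g. k l \<le> n l" using assms by (simp add: k_def)
  ultimately show ?thesis
    using mixed_central_moment[of k "\<lambda>_. 0"] by (simp add: wmean_def)
qed

lemma cov_eq_mixing_moment:
  assumes k: "\<forall>i<g. k i \<le> n i"
  shows "cov M X g k = (\<integral>\<theta>. (\<Prod>i<g. (\<theta> i - (\<integral>\<theta>'. \<theta>' i \<partial>\<nu>)) ^ k i) \<partial>\<nu>)"
proof -
  have "(\<theta> i - wmean M X i) ^ k i = (\<theta> i - (\<integral>\<theta>'. \<theta>' i \<partial>\<nu>)) ^ k i" if "i < g" for i \<theta>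
    using k that mean_eq_mixing_mean[OF that] by (cases "k i = 0") auto
  then show ?thesis
    using mixed_central_moment[OF k, of "wmean M X"] by (simp add: cov_def)
qed

text \<open>Second claim: even central moments have a nonnegative integrand.\<close>
lemma even_cov_nonneg:
  assumes "\<forall>i<g. 2 * k i \<le> n i"
  shows "0 \<le> cov M X g (\<lambda>i. 2 * k i)"
proof -
  have "0 \<le> (\<Prod>i<g. (\<theta> i - (\<integral>\<theta>'. \<theta>' i \<partial>\<nu>)) ^ (2 * k i))" for \<theta> :: "nat \<Rightarrow> real"
    by (intro prod_nonneg) (simp add: power_mult)
  then show ?thesis
    using cov_eq_mixing_moment[of "\<lambda>i. 2 * k i"] assms by simp
qed

lemma integrable_centered_pair:
  assumes "i < g" "j < g"
  shows "integrable \<nu> (\<lambda>\<theta>. (\<theta> i - a) * (\<theta> j - b))"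
proof (rule integrable_mixing_bounded[where B="(1 + \<bar>a\<bar>) * (1 + \<bar>b\<bar>)"])
  show "(\<lambda>\<theta>. (\<theta> i - a) * (\<theta> j - b)) \<in> borel_measurable \<nu>"
    using coordinate_measurable[OF assms(1)] coordinate_measurable[OF assms(2)] by simp
  fix \<theta> assume "\<theta> \<in> space \<nu>"
  then have "\<bar>\<theta> i - a\<bar> \<le> 1 + \<bar>a\<bar>" "\<bar>\<theta> j - b\<bar> \<le> 1 + \<bar>b\<bar>"
    using coordinate_range assms by fastforce+
  then show "\<bar>(\<theta> i - a) * (\<theta> j - b)\<bar> \<le> (1 + \<bar>a\<bar>) * (1 + \<bar>b\<bar>)"
    unfolding abs_mult by (intro mult_mono) auto
qed

text \<open>Third claim: the covariance matrix is the Gram matrix of the centred coordinates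
  \<theta> i - E_\<nu> \<theta> i in L^2(\<nu>), hence positive semidefinite.\<close>
lemma covmat_psd:
  assumes "\<forall>i<g. 2 \<le> n i"
  shows "0 \<le> (\<Sum>i<g. \<Sum>j<g. v i * covmat M X g i j * v j)"
proof -
  define d where "d i \<theta> = \<theta> i - (\<integral>\<theta>'. \<theta>' i \<partial>\<nu>)" for i and \<theta> :: "nat \<Rightarrow> real"
  have "covmat M X g i j = (\<integral>\<theta>. d i \<theta> * d j \<theta> \<partial>\<nu>)" if "i < g" "j < g" for i j
  proof -
    have "\<forall>l<g. pair_exponent i j l \<le> n l"
      using assms by (auto simp: pair_exponent_def)
    then show ?thesis
      using that by (simp add: covmat_eq_cov cov_eq_mixing_moment prod_pair_exponent d_def)
  qed
  then have "(\<Sum>i<g. \<Sum>j<g. v i * covmat M X g i j * v j)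
      = (\<Sum>i<g. \<Sum>j<g. v i * (\<integral>\<theta>. d i \<theta> * d j \<theta> \<partial>\<nu>) * v j)"
    by simp
  also have "\<dots> \<ge> 0"
    by (rule integral_gram_nonneg) (simp_all add: d_def integrable_centered_pair)
  finally show ?thesis .
qed

end

theorem mainTheorem6:
  fixes M :: "'a measure" and X :: "nat \<Rightarrow> nat \<Rightarrow> 'a \<Rightarrow> real"
    and g :: nat and n :: "nat \<Rightarrow> nat" and \<nu> :: "(nat \<Rightarrow> real) measure"
  assumes M: "prob_space M"
    and meas: "\<And>i j. i < g \<Longrightarrow> j < n i \<Longrightarrow> X i j \<in> borel_measurable M"
    and binary: "\<And>i j \<omega>. i < g \<Longrightarrow> j < n i \<Longrightarrow> \<omega> \<in> space M \<Longrightarrow> X i j \<omega> \<in> {0, 1}"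
    and nu: "prob_space \<nu>"
    and nu_sets: "sets \<nu> = sets (PiM {..<g} (\<lambda>_. restrict_space borel {0..1::real}))"
    and mixture: "\<And>k. (\<forall>i<g. k i \<le> n i) \<Longrightarrow>
        measure M {\<omega> \<in> space M. \<forall>i<g. (\<Sum>j<n i. X i j \<omega>) = real (k i)}
        = (\<Prod>i<g. real (n i choose k i)) *
          (\<integral>\<theta>. (\<Prod>i<g. \<theta> i ^ k i * (1 - \<theta> i) ^ (n i - k i)) \<partial>\<nu>)"
    and exch: "\<And>x y :: nat \<Rightarrow> nat \<Rightarrow> real.
        (\<forall>i<g. \<forall>j<n i. x i j \<in> {0, 1} \<and> y i j \<in> {0, 1}) \<Longrightarrow>
        (\<forall>i<g. (\<Sum>j<n i. x i j) = (\<Sum>j<n i. y i j)) \<Longrightarrow>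
        measure M {\<omega> \<in> space M. \<forall>i<g. \<forall>j<n i. X i j \<omega> = x i j}
        = measure M {\<omega> \<in> space M. \<forall>i<g. \<forall>j<n i. X i j \<omega> = y i j}"
  shows "(\<forall>k. (\<forall>i<g. k i \<le> n i) \<longrightarrow>
            cov M X g k = (\<integral>\<theta>. (\<Prod>i<g. (\<theta> i - (\<integral>\<theta>'. \<theta>' i \<partial>\<nu>)) ^ k i) \<partial>\<nu>))
       \<and> (\<forall>k. (\<forall>i<g. k i \<le> n i div 2) \<longrightarrow> cov M X g (\<lambda>i. 2 * k i) \<ge> 0)
       \<and> ((\<forall>i<g. 2 \<le> n i) \<longrightarrow>
            (\<forall>v :: nat \<Rightarrow> real. (\<Sum>i<g. \<Sum>j<g. v i * covmat M X g i j * v j) \<ge> 0))"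
proof -
  interpret exchangeable_mixture M \<nu> X g n
    by (rule exchangeable_mixture.intro[OF M nu exchangeable_mixture_axioms.intro])
      (fact meas binary nu_sets mixture exch)+
  have "2 * k i \<le> n i" if "\<forall>i<g. k i \<le> n i div 2" "i < g" for k i
    using that(1)[rule_format, OF that(2)] by linarith
  then show ?thesis
    using cov_eq_mixing_moment even_cov_nonneg covmat_psd by blast
qed

end
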